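(* For every integer $n \geq 9$, there exists a separating union-closed family $\mathcal{A}$ with base set $[n]$, height $h=5$ and $|\mathcal{B}(\mathcal{A})|=1$ such that \[\mathrm{Avg}(\mathcal{A}) = \frac{\sum_{A \in \mathcal{A}}|A|}{|\mathcal{A}|} < \frac{n}{2}.\]
   Context: A family of sets $\mathcal{A}$ is union-closed if it is a finite family of distinct finite sets with at least one nonempty member set, and $X,Y\in\mathcal{A}$ implies $X\cup Y\in\mathcal{A}$ (the empty set may be a member). For a family $\mathcal{F}$, $b(\mathcal{F})=\bigcup_{F\in\mathcal{F}}F$; the base set $b(\mathcal{A})$ is denoted $[n]=\{1,\dots,n\}$. $\mathcal{A}$ is separating if for any two distinct $x,y\in[n]$ there is $A\in\mathcal{A}$ containing exactly one of $x,y$. A chain in $\mathcal{A}$ is a subfamily any two distinct members of which are comparable under proper inclusion; the height $h$ of $\mathcal{A}$ is the maximum size of a chain in $\mathcal{A}$. For real $x\ge 0$, $\mathcal{A}_{<x}=\{A\in\mathcal{A} : |A|<x\}$. For $\mathcal{S}\subseteq\mathcal{A}$ and $S\in\mathcal{S}$, $\mathrm{irr}_{\mathcal{S}}(S)=\{s\in S : s\notin b(\mathcal{S}\setminus\{S\})\}$, and $\mathcal{S}$ is irredundant if $\mathrm{irr}_{\mathcal{S}}(S)\neq\emptyset$ for every $S\in\mathcal{S}$. Set $B=b(\mathcal{A}_{<n/2})$, and let $\mathcal{B}(\mathcal{A})$ denote any irredundant subfamily of $\mathcal{A}_{<n/2}$ of minimum size such that $b(\mathcal{B}(\mathcal{A}))=B$.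 *)

theory Defs
  imports Complex_Main
begin

definition base_set :: "'a set set \<Rightarrow> 'a set" where
  "base_set F = \<Union>F"

definition union_closed :: "'a set set \<Rightarrow> bool" where
  "union_closed A \<longleftrightarrow> finite A \<and> (\<forall>X\<in>A. finite X) \<and> (\<exists>X\<in>A. X \<noteq> {}) \<and>
     (\<forall>X\<in>A. \<forall>Y\<in>A. X \<union> Y \<in> A)"

definition separating :: "'a set set \<Rightarrow> bool" where
  "separating A \<longleftrightarrow> (\<forall>x\<in>base_set A. \<forall>y\<in>base_set A. x \<noteq> y \<longrightarrow>
     (\<exists>S\<in>A. (x \<in> S \<and> y \<notin> S) \<or> (y \<in> S \<and> x \<notin> S)))"

definition is_chain_in :: "'a set set \<Rightarrow> 'a set set \<Rightarrow> bool" where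
  "is_chain_in C A \<longleftrightarrow> C \<subseteq> A \<and> (\<forall>X\<in>C. \<forall>Y\<in>C. X \<noteq> Y \<longrightarrow> X \<subset> Y \<or> Y \<subset> X)"

definition height :: "'a set set \<Rightarrow> nat" where
  "height A = Max {card C | C. is_chain_in C A}"

definition small_sets :: "'a set set \<Rightarrow> real \<Rightarrow> 'a set set" where
  "small_sets A x = {S\<in>A. real (card S) < x}"

definition irr :: "'a set set \<Rightarrow> 'a set \<Rightarrow> 'a set" where
  "irr S X = {s\<in>X. s \<notin> base_set (S - {X})}"

definition irredundant :: "'a set set \<Rightarrow> bool" where
  "irredundant S \<longleftrightarrow> (\<forall>X\<in>S. irr S X \<noteq> {})"

definition B_set :: "'a set set \<Rightarrow> 'a set" where
  "B_set A = base_set (small_sets A (real (card (base_set A)) / 2))"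

(* |B(A)|: the minimum size of an irredundant subfamily of A_{<n/2} whose union is B *)
definition B_size :: "'a set set \<Rightarrow> nat" where
  "B_size A = (LEAST k. \<exists>S. S \<subseteq> small_sets A (real (card (base_set A)) / 2) \<and>
       irredundant S \<and> base_set S = B_set A \<and> card S = k)"

definition avg_size :: "'a set set \<Rightarrow> real" where
  "avg_size A = (\<Sum>X\<in>A. real (card X)) / real (card A)"

end

theory Submission
  imports Defs
begin

text \<open>Take \<open>k = (n - 1) div 2\<close>, so that \<open>n\<close> is \<open>2k + 1\<close> or \<open>2k + 2\<close>,
  and let \<open>\<A>\<close> consist of the subsets of \<open>[k]\<close> of size at least \<open>k - 2\<close>,
  the sets \<open>[n] - {c}\<close> for \<open>k < c < n\<close>, and \<open>[n]\<close>.
  Every small member lies in \<open>[k]\<close> and every large one contains \<open>[k]\<close>,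
  so \<open>\<A>\<close> is union-closed; member sizes take exactly the five values
  \<open>k - 2, k - 1, k, n - 1, n\<close>, so the height is 5.
  The members below \<open>n/2\<close> are exactly the small ones, and their union \<open>[k]\<close>
  is itself a member, whence \<open>|\<B>(\<A>)| = 1\<close>.
  Finally the roughly \<open>k\<^sup>2/2\<close> sets of size \<open>k - 2\<close>, each about \<open>5/2\<close> below \<open>n/2\<close>,
  outweigh the roughly \<open>k\<close> sets of size \<open>n - 1\<close>, each about \<open>k\<close> above it.\<close>

definition union_stable :: "'a set set \<Rightarrow> bool" where
  "union_stable F \<longleftrightarrow> (\<forall>X\<in>F. \<forall>Y\<in>F. X \<union> Y \<in> F)"

lemma union_stable_Un:
  assumes "union_stable F" "union_stable G" "\<forall>X\<in>F. \<forall>Y\<in>G. X \<subseteq> Y"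
  shows "union_stable (F \<union> G)"
  using assms unfolding union_stable_def by (metis Un_iff sup.absorb2 sup.absorb1)

lemma union_stable_card_ge:
  assumes "finite U"
  shows "union_stable {S. S \<subseteq> U \<and> m \<le> card S}"
  unfolding union_stable_def
proof (intro ballI)
  fix X Y
  assume X: "X \<in> {S. S \<subseteq> U \<and> m \<le> card S}" and Y: "Y \<in> {S. S \<subseteq> U \<and> m \<le> card S}"
  then have "card X \<le> card (X \<union> Y)"
    using assms by (intro card_mono) (auto intro: finite_subset)
  with X Y show "X \<union> Y \<in> {S. S \<subseteq> U \<and> m \<le> card S}" by auto
qed

lemma union_stable_insert_Diff_singletons: "union_stable (insert U ((\<lambda>c. U - {c}) ` C))"
  unfolding union_stable_def by auto

lemma psubset_witnessI: "A \<subseteq> B \<Longrightarrow> x \<in> B \<Longrightarrow> x \<notin> A \<Longrightarrow> A \<subset> B"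
  by blast

lemma is_chain_in_sorted_psubset:
  assumes "sorted_wrt (\<subset>) Xs" "set Xs \<subseteq> A"
  shows "is_chain_in (set Xs) A"
  using assms unfolding is_chain_in_def by (induction Xs) auto

lemma card_set_sorted_psubset:
  assumes "sorted_wrt (\<subset>) Xs"
  shows "card (set Xs) = length Xs"
proof (rule distinct_card)
  show "distinct Xs" using assms by (induction Xs) auto
qed

lemma card_image_card_chain:
  assumes "is_chain_in C A" "\<forall>X\<in>A. finite X"
  shows "card (card ` C) = card C"
proof (rule card_image, rule inj_onI, rule ccontr)
  fix X Y assume "X \<in> C" "Y \<in> C" "card X = card Y" "X \<noteq> Y"
  with assms show False unfolding is_chain_in_def
    by (metis psubset_card_mono less_irrefl subsetD)
qed

lemma height_eq_card_chain:
  assumes "finite A" "\<forall>X\<in>A. finite X" "is_chain_in C A" "card ` A \<subseteq> card ` C"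
  shows "height A = card C"
  unfolding height_def
proof (rule Max_eqI)
  have "finite C"
    using assms(1,3) finite_subset unfolding is_chain_in_def by blast
  have le: "card D \<le> card C" if "is_chain_in D A" for D
  proof -
    have "card D = card (card ` D)"
      using card_image_card_chain[OF that assms(2)] by simp
    also have "\<dots> \<le> card (card ` A)"
      using that assms(1) unfolding is_chain_in_def by (intro card_mono image_mono) simp_all
    also have "\<dots> \<le> card (card ` C)"
      using assms(4) \<open>finite C\<close> by (intro card_mono) simp_all
    also have "\<dots> = card C"
      using card_image_card_chain[OF assms(3,2)] .
    finally show ?thesis .
  qed
  then have "{card D | D. is_chain_in D A} \<subseteq> {..card C}"
    by blast
  then show "finite {card D | D. is_chain_in D A}"
    by (rule finite_subset) simp
  show "y \<le> card C" if "y \<in> {card D | D. is_chain_in D A}" for y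
    using le that by blast
  show "card C \<in> {card D | D. is_chain_in D A}"
    using assms(3) by blast
qed

lemma small_sets_half: "small_sets A (real m / 2) = {S \<in> A. 2 * card S < m}"
  by (auto simp: small_sets_def)

lemma B_size_eq_1:
  assumes "finite A" "B_set A \<in> small_sets A (real (card (base_set A)) / 2)" "B_set A \<noteq> {}"
  shows "B_size A = 1"
  unfolding B_size_def
proof (rule Least_equality)
  show "\<exists>S\<subseteq>small_sets A (real (card (base_set A)) / 2).
          irredundant S \<and> base_set S = B_set A \<and> card S = 1"
    using assms(2,3) by (intro exI[of _ "{B_set A}"]) (auto simp: irredundant_def irr_def base_set_def)
  fix m assume "\<exists>S\<subseteq>small_sets A (real (card (base_set A)) / 2).
                  irredundant S \<and> base_set S = B_set A \<and> card S = m"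
  then obtain S where "S \<subseteq> A" "base_set S = B_set A" "card S = m"
    by (auto simp: small_sets_def)
  with assms(1,3) show "1 \<le> m"
    by (metis base_set_def Sup_empty card_0_eq finite_subset less_one not_less)
qed

lemma card_subsets_with_sizes:
  assumes "finite U" "finite J"
  shows "card {S. S \<subseteq> U \<and> card S \<in> J} = (\<Sum>j\<in>J. card U choose j)"
    and "(\<Sum>S | S \<subseteq> U \<and> card S \<in> J. card S) = (\<Sum>j\<in>J. j * (card U choose j))"
proof -
  have split: "{S. S \<subseteq> U \<and> card S \<in> J} = (\<Union>j\<in>J. {S. S \<subseteq> U \<and> card S = j})" by auto
  have fin: "\<forall>j\<in>J. finite {S. S \<subseteq> U \<and> card S = j}" using assms(1) by auto
  show "card {S. S \<subseteq> U \<and> card S \<in> J} = (\<Sum>j\<in>J. card U choose j)"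
    unfolding split by (subst card_UN_disjoint) (auto simp: assms n_subsets)
  have "(\<Sum>S | S \<subseteq> U \<and> card S \<in> J. card S) = (\<Sum>j\<in>J. \<Sum>S | S \<subseteq> U \<and> card S = j. card S)"
    unfolding split by (rule sum.UNION_disjoint) (use assms fin in auto)
  also have "\<dots> = (\<Sum>j\<in>J. j * (card U choose j))"
    using n_subsets[OF assms(1)] by (intro sum.cong) auto
  finally show "(\<Sum>S | S \<subseteq> U \<and> card S \<in> J. card S) = (\<Sum>j\<in>J. j * (card U choose j))" .
qed

lemma real_choose_two: "real (k choose 2) = real k * (real k - 1) / 2"
  by (cases k) (auto simp: choose_two field_char_0_class.of_nat_div mod_eq_0_iff_dvd algebra_simps)

lemma inj_on_Diff_singleton:
  assumes "C \<subseteq> U"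
  shows "inj_on (\<lambda>c. U - {c}) C"
proof (rule inj_onI)
  fix c d assume c: "c \<in> C" and eq: "U - {c} = U - {d}"
  show "c = d"
  proof (rule ccontr)
    assume "c \<noteq> d"
    with c assms have "c \<in> U - {d}" by auto
    with eq show False by (metis DiffD2 singletonI)
  qed
qed

definition top_layers :: "nat \<Rightarrow> nat set set" where
  "top_layers k = {S. S \<subseteq> {1..k} \<and> k - 2 \<le> card S}"

definition co_singletons :: "nat \<Rightarrow> nat \<Rightarrow> nat set set" where
  "co_singletons n k = (\<lambda>c. {1..n} - {c}) ` {k<..<n}"

definition low_average_family :: "nat \<Rightarrow> nat \<Rightarrow> nat set set" where
  "low_average_family n k = top_layers k \<union> insert {1..n} (co_singletons n k)"

lemma card_le_of_top_layers: "X \<in> top_layers k \<Longrightarrow> card X \<le> k"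
  unfolding top_layers_def using card_mono[of "{1..k}" X] by simp

lemma top_layers_eq_sizes: "top_layers k = {S. S \<subseteq> {1..k} \<and> card S \<in> {k - 2, k - 1, k}}"
proof (rule set_eqI)
  fix S
  show "S \<in> top_layers k \<longleftrightarrow> S \<in> {S. S \<subseteq> {1..k} \<and> card S \<in> {k - 2, k - 1, k}}"
    using card_le_of_top_layers[of S k] by (auto simp: top_layers_def)
qed

lemma Union_top_layers: "\<Union>(top_layers k) = {1..k}"
proof -
  have "{1..k} \<in> top_layers k"
    by (simp add: top_layers_def)
  then show ?thesis
    unfolding top_layers_def by blast
qed

lemma card_top_layers:
  assumes "2 \<le> k"
  shows "card (top_layers k) = (k choose 2) + k + 1"
    and "(\<Sum>X\<in>top_layers k. card X) = (k - 2) * (k choose 2) + (k - 1) * k + k"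
proof -
  have sym: "k choose (k - 2) = k choose 2" "k choose (k - 1) = k"
    using binomial_symmetric[of 2 k] binomial_symmetric[of 1 k] assms by auto
  have sum3: "(\<Sum>j\<in>{k - 2, k - 1, k}. f j) = f (k - 2) + f (k - 1) + f k" for f :: "nat \<Rightarrow> nat"
    using assms by (subst sum.insert; auto)+
  have "card (top_layers k) = (\<Sum>j\<in>{k - 2, k - 1, k}. k choose j)"
    using card_subsets_with_sizes(1)[of "{1..k}" "{k - 2, k - 1, k}"]
    unfolding top_layers_eq_sizes by simp
  then show "card (top_layers k) = (k choose 2) + k + 1"
    unfolding sum3 sym by simp
  have "(\<Sum>X\<in>top_layers k. card X) = (\<Sum>j\<in>{k - 2, k - 1, k}. j * (k choose j))"
    using card_subsets_with_sizes(2)[of "{1..k}" "{k - 2, k - 1, k}"]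
    unfolding top_layers_eq_sizes by simp
  then show "(\<Sum>X\<in>top_layers k. card X) = (k - 2) * (k choose 2) + (k - 1) * k + k"
    unfolding sum3 sym by simp
qed

lemma card_co_singletons:
  "card (co_singletons n k) = n - k - 1"
  "(\<Sum>X\<in>co_singletons n k. card X) = (n - k - 1) * (n - 1)"
proof -
  have "inj_on (\<lambda>c. {1..n} - {c}) {k<..<n}"
    by (rule inj_on_Diff_singleton) auto
  then show card: "card (co_singletons n k) = n - k - 1"
    unfolding co_singletons_def by (simp add: card_image)
  have "(\<Sum>X\<in>co_singletons n k. card X) = (\<Sum>X\<in>co_singletons n k. n - 1)"
    by (rule sum.cong) (auto simp: co_singletons_def)
  with card show "(\<Sum>X\<in>co_singletons n k. card X) = (n - k - 1) * (n - 1)" by simp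
qed

lemma low_average_family_subset_Pow:
  "k < n \<Longrightarrow> low_average_family n k \<subseteq> Pow {1..n}"
  by (auto simp: low_average_family_def top_layers_def co_singletons_def)

lemma union_closed_low_average_family:
  assumes "k < n"
  shows "union_closed (low_average_family n k)"
  unfolding union_closed_def
proof (intro conjI)
  show "finite (low_average_family n k)" "\<forall>X\<in>low_average_family n k. finite X"
    using low_average_family_subset_Pow[OF assms] by (auto intro: finite_subset)
  show "\<exists>X\<in>low_average_family n k. X \<noteq> {}"
    using assms by (intro bexI[of _ "{1..n}"]) (auto simp: low_average_family_def)
  have "\<forall>Y\<in>insert {1..n} (co_singletons n k). {1..k} \<subseteq> Y"
    using assms by (auto simp: co_singletons_def)
  then have "\<forall>X\<in>top_layers k. \<forall>Y\<in>insert {1..n} (co_singletons n k). X \<subseteq> Y"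
    unfolding top_layers_def by blast
  then have "union_stable (low_average_family n k)"
    unfolding low_average_family_def co_singletons_def top_layers_def
    by (intro union_stable_Un union_stable_card_ge union_stable_insert_Diff_singletons) simp_all
  then show "\<forall>X\<in>low_average_family n k. \<forall>Y\<in>low_average_family n k. X \<union> Y \<in> low_average_family n k"
    unfolding union_stable_def .
qed

lemma base_set_low_average_family:
  assumes "k < n"
  shows "base_set (low_average_family n k) = {1..n}"
proof -
  have "{1..n} \<in> low_average_family n k"
    by (simp add: low_average_family_def)
  with low_average_family_subset_Pow[OF assms] show ?thesis
    unfolding base_set_def by blast
qed

lemma separating_low_average_family:
  assumes "2 \<le> k" "k < n"
  shows "separating (low_average_family n k)"
  unfolding separating_def base_set_low_average_family[OF assms(2)]
proof (intro ballI impI)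
  fix x y :: nat assume xy: "x \<in> {1..n}" "y \<in> {1..n}" "x \<noteq> y"
  have co: "{1..n} - {c} \<in> low_average_family n k" if "k < c" "c < n" for c
    using that by (auto simp: low_average_family_def co_singletons_def)
  have top: "S \<in> low_average_family n k" if "S \<subseteq> {1..k}" "k - 2 \<le> card S" for S
    using that by (simp add: low_average_family_def top_layers_def)
  consider "k < x" "x < n" | "k < y" "y < n" | "x \<le> k" "y \<le> k"
    | "x \<le> k \<and> y = n \<or> x = n \<and> y \<le> k"
    using xy by fastforce
  then show "\<exists>S\<in>low_average_family n k. x \<in> S \<and> y \<notin> S \<or> y \<in> S \<and> x \<notin> S"
  proof cases
    case 1
    then have "{1..n} - {x} \<in> low_average_family n k" by (rule co)
    with xy show ?thesis by (intro bexI[of _ "{1..n} - {x}"]) auto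
  next
    case 2
    then have "{1..n} - {y} \<in> low_average_family n k" by (rule co)
    with xy show ?thesis by (intro bexI[of _ "{1..n} - {y}"]) auto
  next
    case 3
    with xy have "{1..k} - {x} \<in> low_average_family n k" by (intro top) auto
    with xy 3 show ?thesis by (intro bexI[of _ "{1..k} - {x}"]) auto
  next
    case 4
    have "{1..k} \<in> low_average_family n k" by (intro top) auto
    with xy 4 assms show ?thesis by (intro bexI[of _ "{1..k}"]) auto
  qed
qed

lemma card_mem_low_average_family:
  assumes "k < n" "X \<in> low_average_family n k"
  shows "card X \<in> {k - 2, k - 1, k, n - 1, n}"
  using assms(2) unfolding low_average_family_def top_layers_eq_sizes co_singletons_def by auto

lemma height_low_average_family:
  assumes "2 \<le> k" "k + 1 < n"
  shows "height (low_average_family n k) = 5"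
proof -
  define Xs where "Xs = [{3..k}, {2..k}, {1..k}, {1..n} - {k + 1}, {1..n}]"
  have "{3..k} \<subset> {2..k}"
    using assms by (intro psubset_witnessI[of _ _ 2]) auto
  moreover have "{2..k} \<subset> {1..k}"
    using assms by (intro psubset_witnessI[of _ _ 1]) auto
  moreover have "{1..k} \<subset> {1..n} - {k + 1}"
    using assms by (intro psubset_witnessI[of _ _ n]) auto
  moreover have "{1..n} - {k + 1} \<subset> {1..n}"
    using assms by (intro psubset_witnessI[of _ _ "k + 1"]) auto
  ultimately have sorted: "sorted_wrt (\<subset>) Xs"
    unfolding Xs_def sorted_wrt2[OF transp_on_less] by simp
  have "{3..k} \<in> top_layers k" "{2..k} \<in> top_layers k" "{1..k} \<in> top_layers k"
    by (auto simp: top_layers_def)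
  moreover have "{1..n} - {k + 1} \<in> co_singletons n k"
    unfolding co_singletons_def using assms by (intro image_eqI[of _ _ "k + 1"]) auto
  ultimately have "set Xs \<subseteq> low_average_family n k"
    unfolding Xs_def low_average_family_def by simp
  then have chain: "is_chain_in (set Xs) (low_average_family n k)"
    using sorted by (rule is_chain_in_sorted_psubset[rotated])
  have "card ` set Xs = {k - 2, k - 1, k, n - 1, n}"
    using assms unfolding Xs_def by simp
  moreover have "card ` low_average_family n k \<subseteq> {k - 2, k - 1, k, n - 1, n}"
    using assms by (intro image_subsetI card_mem_low_average_family) simp_all
  ultimately have sizes: "card ` low_average_family n k \<subseteq> card ` set Xs"
    by simp
  have "union_closed (low_average_family n k)"
    using assms by (intro union_closed_low_average_family) simp
  then have "height (low_average_family n k) = card (set Xs)"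
    using chain sizes unfolding union_closed_def by (intro height_eq_card_chain) auto
  also have "\<dots> = 5"
    using card_set_sorted_psubset[OF sorted] by (simp add: Xs_def)
  finally show ?thesis .
qed

lemma small_sets_low_average_family:
  assumes "1 \<le> k" "2 * k < n"
  shows "small_sets (low_average_family n k) (real (card (base_set (low_average_family n k))) / 2)
           = top_layers k"
proof -
  have "n - 1 \<le> card X" if "X \<in> insert {1..n} (co_singletons n k)" for X
    using that by (auto simp: co_singletons_def)
  then have "\<not> 2 * card X < n" if "X \<in> insert {1..n} (co_singletons n k)" for X
    using that assms by fastforce
  moreover have "2 * card X < n" if "X \<in> top_layers k" for X
    using card_le_of_top_layers[OF that] assms by simp
  moreover have "card (base_set (low_average_family n k)) = n"
    using assms by (simp add: base_set_low_average_family)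
  ultimately show ?thesis
    unfolding small_sets_half low_average_family_def by auto
qed

lemma B_size_low_average_family:
  assumes "1 \<le> k" "2 * k < n"
  shows "B_size (low_average_family n k) = 1"
proof (rule B_size_eq_1)
  have "B_set (low_average_family n k) = {1..k}"
    unfolding B_set_def small_sets_low_average_family[OF assms]
    by (simp add: base_set_def Union_top_layers)
  then show "B_set (low_average_family n k) \<noteq> {}"
    and "B_set (low_average_family n k) \<in> small_sets (low_average_family n k)
           (real (card (base_set (low_average_family n k))) / 2)"
    using assms unfolding small_sets_low_average_family[OF assms] by (simp_all add: top_layers_def)
  show "finite (low_average_family n k)"
    using union_closed_low_average_family assms by (simp add: union_closed_def)
qed

lemma low_average_family_disjoint:
  assumes "k + 1 < n"
  shows "top_layers k \<inter> co_singletons n k = {}"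
    and "{1..n} \<notin> top_layers k" "{1..n} \<notin> co_singletons n k"
proof -
  have co: "card X = n - 1" if "X \<in> co_singletons n k" for X
    using that by (auto simp: co_singletons_def)
  have "X \<notin> co_singletons n k" if "X \<in> top_layers k" for X
  proof
    assume "X \<in> co_singletons n k"
    with card_le_of_top_layers[OF that] assms show False by (simp add: co)
  qed
  then show "top_layers k \<inter> co_singletons n k = {}"
    by blast
  show "{1..n} \<notin> top_layers k"
  proof
    assume "{1..n} \<in> top_layers k"
    from card_le_of_top_layers[OF this] assms show False by simp
  qed
  show "{1..n} \<notin> co_singletons n k"
  proof
    assume "{1..n} \<in> co_singletons n k"
    from co[OF this] assms show False by simp
  qed
qed

lemma card_low_average_family:
  assumes "2 \<le> k" "k + 1 < n"
  shows "card (low_average_family n k) = (k choose 2) + n + 1"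
    and "(\<Sum>X\<in>low_average_family n k. card X)
           = (k - 2) * (k choose 2) + (k - 1) * k + k + (n - k - 1) * (n - 1) + n"
proof -
  have fin: "finite (top_layers k)" "finite (co_singletons n k)"
    by (auto simp: top_layers_def co_singletons_def intro: finite_subset[of _ "Pow {1..k}"])
  note disj = low_average_family_disjoint[OF assms(2)]
  have "card (low_average_family n k) = card (top_layers k) + card (co_singletons n k) + 1"
    unfolding low_average_family_def using fin disj by (simp add: card_Un_disjoint)
  then show "card (low_average_family n k) = (k choose 2) + n + 1"
    using assms by (simp add: card_top_layers card_co_singletons)
  have "(\<Sum>X\<in>low_average_family n k. card X)
      = (\<Sum>X\<in>top_layers k. card X) + (\<Sum>X\<in>co_singletons n k. card X) + n"
    unfolding low_average_family_def using fin disj by (simp add: sum.union_disjoint)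
  then show "(\<Sum>X\<in>low_average_family n k. card X)
      = (k - 2) * (k choose 2) + (k - 1) * k + k + (n - k - 1) * (n - 1) + n"
    using assms by (simp add: card_top_layers card_co_singletons)
qed

lemma avg_size_low_average_family:
  assumes "4 \<le> k" "n = 2 * k + 1 \<or> n = 2 * k + 2"
  shows "avg_size (low_average_family n k) < real n / 2"
proof -
  let ?F = "low_average_family n k"
  have k: "2 \<le> k" "k + 1 < n"
    using assms by auto
  have card: "real (card ?F) = real k * (real k - 1) / 2 + real n + 1"
    using card_low_average_family(1)[OF k] by (simp add: real_choose_two)
  have "real (\<Sum>X\<in>?F. card X) = (real k - 2) * (real k * (real k - 1) / 2) + (real k - 1) * real k
       + real k + (real n - real k - 1) * (real n - 1) + real n"
    using card_low_average_family(2)[OF k] k by (simp add: real_choose_two of_nat_diff)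
  moreover have "2 * ((real k - 2) * (real k * (real k - 1) / 2) + (real k - 1) * real k
       + real k + (real n - real k - 1) * (real n - 1) + real n)
       < real n * (real k * (real k - 1) / 2 + real n + 1)"
  proof -
    have "4 * real k \<le> real k * real k" using assms(1) by (intro mult_right_mono) auto
    with assms show ?thesis by (auto simp: field_simps)
  qed
  moreover have "0 < real (card ?F)"
    using card_low_average_family(1)[OF k] by simp
  ultimately show ?thesis
    unfolding avg_size_def card of_nat_sum[symmetric] by (simp add: field_simps)
qed

theorem lemma3p1:
  fixes n :: nat
  assumes "n \<ge> 9"
  shows "\<exists>A :: nat set set. union_closed A \<and> base_set A = {1..n} \<and> separating A \<and>
           height A = 5 \<and> B_size A = 1 \<and> avg_size A < real n / 2"
proof -
  define k where "k = (n - 1) div 2"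
  have k: "4 \<le> k" "n = 2 * k + 1 \<or> n = 2 * k + 2"
    using assms unfolding k_def by auto
  then have "1 \<le> k" "2 \<le> k" "k < n" "k + 1 < n" "2 * k < n"
    by auto
  then show ?thesis
    using k
    by (intro exI[of _ "low_average_family n k"] conjI union_closed_low_average_family
        base_set_low_average_family separating_low_average_family height_low_average_family
        B_size_low_average_family avg_size_low_average_family)
qed

end
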